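(* Consider the model below. A pair $(\mathbf A^\ddagger,\mathbf q^\ddagger)\in\mathcal A\times\mathbb R^n_{\ge0}$ maximizes aggregate profit $\Pi$ over $\mathcal A\times\mathbb R^n_{\ge 0}$ if and only if there is a pair $(\mathbf A^\dagger,\mathbf q^\dagger)$ maximizing total surplus $\Omega$ over $\mathcal A\times\mathbb R^n_{\ge0}$ with $\mathbf A^\ddagger=\mathbf A^\dagger$ and $\mathbf q^\ddagger=\mathbf q^\dagger/2$. Consequently, for such pairs, $\Omega(\mathbf A^\ddagger,\mathbf q^\ddagger)/\Omega(\mathbf A^\dagger,\mathbf q^\dagger)=3/4$.
   Context: Model: integers $n\ge2$ (firms) and $m\ge2$ (common characteristics); parameters $\alpha>0$, $\boldsymbol\beta\in\mathbb R^m$ with $\|\boldsymbol\beta\|_2=1$, and $\boldsymbol\gamma\in\mathbb R^n$ with $\gamma_i>0$ for all $i$. $\mathcal A$ is the set of real $m\times n$ matrices $\mathbf A=[\mathbf a_1,\dots,\mathbf a_n]$ with $\|\mathbf a_i\|_2=1$ for all $i$; an output profile is $\mathbf q\in\mathbb R^n_{\ge 0}$. With $\mathbf x=\mathbf A\mathbf q$, total surplus is $\Omega(\mathbf A,\mathbf q)=\alpha(\mathbf x^\top\boldsymbol\beta-\tfrac12\mathbf x^\top\mathbf x)+\mathbf q^\top\boldsymbol\gamma-\tfrac12\mathbf q^\top\mathbf q$ and aggregate profit is $\Pi(\mathbf A,\mathbf q)=\alpha(\mathbf x^\top\boldsymbol\beta-\mathbf x^\top\mathbf x)+\mathbf q^\top\boldsymbol\gamma-\mathbf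 q^\top\mathbf q$. *)

theory Defs
  imports "HOL-Analysis.Analysis"
begin

text \<open>Matrices A are m x n: type real^'n^'m (rows indexed by 'm, columns by 'n).
  Column i of A is the characteristic vector a_i of firm i.\<close>

definition char_set :: "(real^'n^'m) set" where
  "char_set = {A. \<forall>i. norm (column i A) = 1}"

definition nonneg_outputs :: "(real^'n) set" where
  "nonneg_outputs = {q. \<forall>i. 0 \<le> q $ i}"

definition total_surplus ::
  "real \<Rightarrow> real^'m \<Rightarrow> real^'n \<Rightarrow> real^'n^'m \<Rightarrow> real^'n \<Rightarrow> real" where
  "total_surplus \<alpha> \<beta> \<gamma> A q =
     (let x = A *v q in
        \<alpha> * (x \<bullet> \<beta> - (1/2) * (x \<bullet> x)) + q \<bullet> \<gamma> - (1/2) * (q \<bullet> q))"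

definition aggregate_profit ::
  "real \<Rightarrow> real^'m \<Rightarrow> real^'n \<Rightarrow> real^'n^'m \<Rightarrow> real^'n \<Rightarrow> real" where
  "aggregate_profit \<alpha> \<beta> \<gamma> A q =
     (let x = A *v q in
        \<alpha> * (x \<bullet> \<beta> - x \<bullet> x) + q \<bullet> \<gamma> - q \<bullet> q)"

definition is_maximizer ::
  "(real^'n^'m \<Rightarrow> real^'n \<Rightarrow> real) \<Rightarrow> real^'n^'m \<Rightarrow> real^'n \<Rightarrow> bool" where
  "is_maximizer f A q \<longleftrightarrow>
     A \<in> char_set \<and> q \<in> nonneg_outputs \<and>
     (\<forall>A' \<in> char_set. \<forall>q' \<in> nonneg_outputs. f A' q' \<le> f A q)"

end

theory Submission
  imports Defs
begin

text \<open>Write \<open>\<Omega>(A,q) = L(A,q) - Q(A,q)/2\<close> with \<open>L\<close> linear and \<open>Q\<close> quadratic in \<open>q\<close>;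
  then \<open>\<Pi>(A,q) = L - Q = \<Omega>(A,2q)/2\<close>, so the profit maximizers are exactly the surplus
  maximizers with halved outputs. Along the ray \<open>t \<mapsto> \<Omega>(A,tq)\<close> through a surplus maximizer
  the derivative at \<open>t = 1\<close> vanishes, i.e. \<open>L = Q\<close>; hence \<open>\<Omega>(A,q) = Q/2\<close> and
  \<open>\<Omega>(A,q/2) = L/2 - Q/8 = 3Q/8\<close>. The maximum is positive (a single firm with characteristic
  \<open>\<beta>\<close> and a suitable output already earns a positive surplus), so the ratio is \<open>3/4\<close>.\<close>

definition surplus_linear :: "real \<Rightarrow> real^'m \<Rightarrow> real^'n \<Rightarrow> real^'n^'m \<Rightarrow> real^'n \<Rightarrow> real" where
  "surplus_linear \<alpha> \<beta> \<gamma> A q = \<alpha> * ((A *v q) \<bullet> \<beta>) + q \<bullet> \<gamma>"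

definition surplus_quadratic :: "real \<Rightarrow> real^'n^'m \<Rightarrow> real^'n \<Rightarrow> real" where
  "surplus_quadratic \<alpha> A q = \<alpha> * ((A *v q) \<bullet> (A *v q)) + q \<bullet> q"

lemma total_surplus_scaleR:
  "total_surplus \<alpha> \<beta> \<gamma> A (t *\<^sub>R q) =
     t * surplus_linear \<alpha> \<beta> \<gamma> A q - t\<^sup>2 / 2 * surplus_quadratic \<alpha> A q"
  unfolding total_surplus_def surplus_linear_def surplus_quadratic_def Let_def
    matrix_vector_mult_scaleR
  by (simp add: algebra_simps power2_eq_square)

lemma total_surplus_eq:
  "total_surplus \<alpha> \<beta> \<gamma> A q = surplus_linear \<alpha> \<beta> \<gamma> A q - surplus_quadratic \<alpha> A q / 2"
  using total_surplus_scaleR[of \<alpha> \<beta> \<gamma> A 1 q] by simp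

lemma aggregate_profit_eq_total_surplus_double:
  "aggregate_profit \<alpha> \<beta> \<gamma> A q = total_surplus \<alpha> \<beta> \<gamma> A (2 *\<^sub>R q) / 2"
  unfolding total_surplus_scaleR aggregate_profit_def surplus_linear_def surplus_quadratic_def
    Let_def
  by (simp add: algebra_simps)

lemma scaleR_mem_nonneg_outputs_iff:
  assumes "c > 0"
  shows "c *\<^sub>R q \<in> nonneg_outputs \<longleftrightarrow> q \<in> nonneg_outputs"
  using assms by (simp add: nonneg_outputs_def zero_le_mult_iff)

lemma is_maximizer_scaleR_outputs:
  fixes f :: "real^'n^'m \<Rightarrow> real^'n \<Rightarrow> real"
  assumes "c > 0"
  shows "is_maximizer (\<lambda>A q. f A (c *\<^sub>R q)) A q \<longleftrightarrow> is_maximizer f A (c *\<^sub>R q)"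
proof -
  have "(\<forall>A' \<in> char_set. \<forall>q' \<in> nonneg_outputs. f A' (c *\<^sub>R q') \<le> v) \<longleftrightarrow>
      (\<forall>A' \<in> char_set. \<forall>q' \<in> nonneg_outputs. f A' q' \<le> v)" for v
  proof (intro iffI ballI)
    fix A' :: "real^'n^'m" and q' :: "real^'n"
    assume "\<forall>A' \<in> char_set. \<forall>q' \<in> nonneg_outputs. f A' (c *\<^sub>R q') \<le> v"
      and "A' \<in> char_set" "q' \<in> nonneg_outputs"
    moreover have "inverse c *\<^sub>R q' \<in> nonneg_outputs" and "q' = c *\<^sub>R (inverse c *\<^sub>R q')"
      using assms \<open>q' \<in> nonneg_outputs\<close> scaleR_mem_nonneg_outputs_iff[of "inverse c"] by auto
    ultimately show "f A' q' \<le> v"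
      by metis
  qed (use scaleR_mem_nonneg_outputs_iff[OF assms] in blast)
  then show ?thesis
    unfolding is_maximizer_def scaleR_mem_nonneg_outputs_iff[OF assms] by simp
qed

lemma is_maximizer_divide:
  assumes "k > 0"
  shows "is_maximizer (\<lambda>A q. f A q / k) A q \<longleftrightarrow> is_maximizer f A q"
  using assms unfolding is_maximizer_def by (simp add: divide_le_cancel)

lemma is_maximizer_aggregate_profit_iff:
  "is_maximizer (aggregate_profit \<alpha> \<beta> \<gamma>) A q \<longleftrightarrow> is_maximizer (total_surplus \<alpha> \<beta> \<gamma>) A (2 *\<^sub>R q)"
proof -
  have "aggregate_profit \<alpha> \<beta> \<gamma> = (\<lambda>A q. total_surplus \<alpha> \<beta> \<gamma> A (2 *\<^sub>R q) / 2)"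
    by (intro ext) (rule aggregate_profit_eq_total_surplus_double)
  then show ?thesis
    by (simp add: is_maximizer_divide[where f = "\<lambda>A q. total_surplus \<alpha> \<beta> \<gamma> A (2 *\<^sub>R q)"]
        is_maximizer_scaleR_outputs)
qed

lemma quadratic_max_at_one_balance:
  fixes L Q :: real
  assumes "\<And>t. t \<ge> 0 \<Longrightarrow> t * L - t\<^sup>2 / 2 * Q \<le> L - Q / 2"
  shows "L = Q"
proof -
  have "((\<lambda>t. t * L - t\<^sup>2 / 2 * Q) has_real_derivative L - Q) (at 1)"
    by (auto intro!: derivative_eq_intros)
  moreover have "\<forall>t. \<bar>1 - t\<bar> < 1 \<longrightarrow> t * L - t\<^sup>2 / 2 * Q \<le> 1 * L - 1\<^sup>2 / 2 * Q"
    using assms by simp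
  ultimately have "L - Q = 0"
    by (rule DERIV_local_max[OF _ zero_less_one])
  then show ?thesis by simp
qed

lemma is_maximizer_total_surplus_balance:
  assumes "is_maximizer (total_surplus \<alpha> \<beta> \<gamma>) A q"
  shows "surplus_linear \<alpha> \<beta> \<gamma> A q = surplus_quadratic \<alpha> A q"
proof (rule quadratic_max_at_one_balance)
  fix t :: real
  assume "t \<ge> 0"
  then have "total_surplus \<alpha> \<beta> \<gamma> A (t *\<^sub>R q) \<le> total_surplus \<alpha> \<beta> \<gamma> A q"
    using assms scaleR_mem_nonneg_outputs_iff[of t q] unfolding is_maximizer_def
    by (cases "t = 0") (auto simp: nonneg_outputs_def)
  then show "t * surplus_linear \<alpha> \<beta> \<gamma> A q - t\<^sup>2 / 2 * surplus_quadratic \<alpha> A q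
      \<le> surplus_linear \<alpha> \<beta> \<gamma> A q - surplus_quadratic \<alpha> A q / 2"
    using total_surplus_eq[of \<alpha> \<beta> \<gamma> A q] by (simp add: total_surplus_scaleR)
qed

lemma const_columns_mem_char_set:
  assumes "norm \<beta> = 1"
  shows "(\<chi> r c. \<beta> $ r) \<in> char_set"
  using assms by (simp add: char_set_def column_def vec_eq_iff)

lemma exists_total_surplus_pos:
  fixes \<beta> :: "real^'m" and \<gamma> :: "real^'n"
  assumes "\<alpha> > 0" and "norm \<beta> = 1" and "\<gamma> $ i > 0"
  shows "\<exists>A \<in> char_set. \<exists>q \<in> nonneg_outputs. total_surplus \<alpha> \<beta> \<gamma> A q > 0"
proof -
  define A :: "real^'n^'m" where "A = (\<chi> r c. \<beta> $ r)"
  define e :: "real^'n" where "e = axis i 1"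
  define s where "s = (\<alpha> + \<gamma> $ i) / (\<alpha> + 1)"
  have "s > 0" and s: "s * (\<alpha> + 1) = \<alpha> + \<gamma> $ i"
    using assms by (simp_all add: s_def)
  have "A *v e = \<beta>"
    by (simp add: A_def e_def vec_eq_iff matrix_vector_mult_def axis_def if_distrib cong: if_cong)
  moreover have "\<beta> \<bullet> \<beta> = 1"
    using assms(2) by (simp add: norm_eq_sqrt_inner)
  ultimately have "total_surplus \<alpha> \<beta> \<gamma> A (s *\<^sub>R e) = s * (\<alpha> + \<gamma> $ i) - s\<^sup>2 / 2 * (\<alpha> + 1)"
    by (simp add: total_surplus_scaleR surplus_linear_def surplus_quadratic_def e_def inner_axis')
  also have "\<dots> = s * (\<alpha> + \<gamma> $ i) / 2"
    using s by (simp add: power2_eq_square field_simps)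
  also have "\<dots> > 0"
    using \<open>s > 0\<close> assms by simp
  finally have "total_surplus \<alpha> \<beta> \<gamma> A (s *\<^sub>R e) > 0" .
  moreover have "A \<in> char_set"
    unfolding A_def using assms(2) by (rule const_columns_mem_char_set)
  moreover have "s *\<^sub>R e \<in> nonneg_outputs"
    using \<open>s > 0\<close> by (simp add: e_def nonneg_outputs_def axis_def)
  ultimately show ?thesis
    by blast
qed

lemma total_surplus_halved_maximizer_ratio:
  assumes "\<alpha> > 0" and "norm \<beta> = 1" and "\<forall>i. \<gamma> $ i > 0"
    and max: "is_maximizer (total_surplus \<alpha> \<beta> \<gamma>) A q"
  shows "total_surplus \<alpha> \<beta> \<gamma> A ((1/2) *\<^sub>R q) / total_surplus \<alpha> \<beta> \<gamma> A q = 3/4"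
proof -
  obtain A' q' where "A' \<in> char_set" "q' \<in> nonneg_outputs" "total_surplus \<alpha> \<beta> \<gamma> A' q' > 0"
    using exists_total_surplus_pos[OF assms(1,2)] assms(3) by blast
  with max have "total_surplus \<alpha> \<beta> \<gamma> A q > 0"
    unfolding is_maximizer_def by force
  moreover have "surplus_linear \<alpha> \<beta> \<gamma> A q = surplus_quadratic \<alpha> A q"
    using max by (rule is_maximizer_total_surplus_balance)
  ultimately have "total_surplus \<alpha> \<beta> \<gamma> A q = surplus_quadratic \<alpha> A q / 2"
    and "surplus_quadratic \<alpha> A q > 0"
    by (simp_all add: total_surplus_eq)
  moreover have "total_surplus \<alpha> \<beta> \<gamma> A ((1/2) *\<^sub>R q) = 3/8 * surplus_quadratic \<alpha> A q"
    using \<open>surplus_linear \<alpha> \<beta> \<gamma> A q = surplus_quadratic \<alpha> A q\<close>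
    by (simp add: total_surplus_scaleR power2_eq_square)
  ultimately show ?thesis
    by (simp only:) simp
qed

theorem proposition1:
  fixes \<alpha> :: real and \<beta> :: "real^'m" and \<gamma> :: "real^'n"
  assumes "CARD('n) \<ge> 2" and "CARD('m) \<ge> 2"
    and "\<alpha> > 0" and "norm \<beta> = 1" and "\<forall>i. \<gamma> $ i > 0"
  shows "(\<forall>(A2::real^'n^'m) q2. A2 \<in> char_set \<and> q2 \<in> nonneg_outputs \<longrightarrow>
            (is_maximizer (aggregate_profit \<alpha> \<beta> \<gamma>) A2 q2 \<longleftrightarrow>
             (\<exists>A1 q1. is_maximizer (total_surplus \<alpha> \<beta> \<gamma>) A1 q1 \<and>
                      A2 = A1 \<and> q2 = (1/2) *\<^sub>R q1)))
       \<and> (\<forall>(A1::real^'n^'m) q1 A2 q2.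
            is_maximizer (aggregate_profit \<alpha> \<beta> \<gamma>) A2 q2 \<and>
            is_maximizer (total_surplus \<alpha> \<beta> \<gamma>) A1 q1 \<and>
            A2 = A1 \<and> q2 = (1/2) *\<^sub>R q1 \<longrightarrow>
            total_surplus \<alpha> \<beta> \<gamma> A2 q2 / total_surplus \<alpha> \<beta> \<gamma> A1 q1 = 3/4)"
proof (intro conjI allI impI)
  fix A2 :: "real^'n^'m" and q2 :: "real^'n"
  have "q2 = (1/2) *\<^sub>R q1 \<longleftrightarrow> q1 = 2 *\<^sub>R q2" for q1 :: "real^'n"
    by auto
  then show "is_maximizer (aggregate_profit \<alpha> \<beta> \<gamma>) A2 q2 \<longleftrightarrow>
      (\<exists>A1 q1. is_maximizer (total_surplus \<alpha> \<beta> \<gamma>) A1 q1 \<and> A2 = A1 \<and> q2 = (1/2) *\<^sub>R q1)"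
    by (simp add: is_maximizer_aggregate_profit_iff)
next
  fix A1 A2 :: "real^'n^'m" and q1 q2 :: "real^'n"
  assume "is_maximizer (aggregate_profit \<alpha> \<beta> \<gamma>) A2 q2 \<and>
      is_maximizer (total_surplus \<alpha> \<beta> \<gamma>) A1 q1 \<and> A2 = A1 \<and> q2 = (1/2) *\<^sub>R q1"
  then show "total_surplus \<alpha> \<beta> \<gamma> A2 q2 / total_surplus \<alpha> \<beta> \<gamma> A1 q1 = 3/4"
    using total_surplus_halved_maximizer_ratio[OF assms(3-5)] by blast
qed

end
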